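(* Let $G=(V,E)$ be a simple connected graph with $n=|V|\ge 2$ vertices and diameter $d=\mathrm{diam}(G)$. Then the pebbling number of $G$ satisfies $$f(G) \leq \left(n + \left\lfloor \frac{n-1}{d} \right\rfloor - 1\right) 2^{d-1} - n + 2.$$
   Context: A distribution of pebbles on $G$ is a function $D: V \to \mathbb{N}=\{0,1,2,\dots\}$; its size is $|D|=\sum_{v\in V} D(v)$. A pebbling step removes two pebbles from some vertex and places one pebble on an adjacent vertex. For a root vertex $v$, $D$ is $v$-solvable if, after some finite sequence of pebbling steps starting from $D$, at least one pebble is on $v$; $D$ is solvable if it is $v$-solvable for every $v\in V$. The pebbling number $f(G)$ is the smallest integer $N$ such that every distribution of size $N$ on $G$ is solvable. *)

theory Defs
  imports Main
begin

definition simple_graph :: "'a set \<Rightarrow> ('a \<Rightarrow> 'a \<Rightarrow> bool) \<Rightarrow> bool" where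
  "simple_graph V E \<longleftrightarrow> finite V \<and> (\<forall>u v. E u v \<longrightarrow> u \<in> V \<and> v \<in> V)
     \<and> (\<forall>u v. E u v \<longrightarrow> E v u) \<and> (\<forall>v. \<not> E v v)"

definition walk :: "'a set \<Rightarrow> ('a \<Rightarrow> 'a \<Rightarrow> bool) \<Rightarrow> 'a \<Rightarrow> 'a \<Rightarrow> nat \<Rightarrow> bool" where
  "walk V E u v k \<longleftrightarrow> (\<exists>p :: nat \<Rightarrow> 'a. p 0 = u \<and> p k = v \<and> (\<forall>i\<le>k. p i \<in> V)
      \<and> (\<forall>i<k. E (p i) (p (Suc i))))"

definition connected_graph :: "'a set \<Rightarrow> ('a \<Rightarrow> 'a \<Rightarrow> bool) \<Rightarrow> bool" where
  "connected_graph V E \<longleftrightarrow> (\<forall>u\<in>V. \<forall>v\<in>V. \<exists>k. walk V E u v k)"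

definition dist :: "'a set \<Rightarrow> ('a \<Rightarrow> 'a \<Rightarrow> bool) \<Rightarrow> 'a \<Rightarrow> 'a \<Rightarrow> nat" where
  "dist V E u v = (LEAST k. walk V E u v k)"

definition diam :: "'a set \<Rightarrow> ('a \<Rightarrow> 'a \<Rightarrow> bool) \<Rightarrow> nat" where
  "diam V E = Max {dist V E u v | u v. u \<in> V \<and> v \<in> V}"

definition distribution :: "'a set \<Rightarrow> ('a \<Rightarrow> nat) \<Rightarrow> bool" where
  "distribution V D \<longleftrightarrow> (\<forall>v. v \<notin> V \<longrightarrow> D v = 0)"

definition pebbling_step :: "('a \<Rightarrow> 'a \<Rightarrow> bool) \<Rightarrow> ('a \<Rightarrow> nat) \<Rightarrow> ('a \<Rightarrow> nat) \<Rightarrow> bool" where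
  "pebbling_step E D D' \<longleftrightarrow> (\<exists>u v. E u v \<and> 2 \<le> D u \<and> D' = (D(u := D u - 2))(v := D v + 1))"

definition root_solvable :: "('a \<Rightarrow> 'a \<Rightarrow> bool) \<Rightarrow> ('a \<Rightarrow> nat) \<Rightarrow> 'a \<Rightarrow> bool" where
  "root_solvable E D r \<longleftrightarrow> (\<exists>D'. (pebbling_step E)\<^sup>*\<^sup>* D D' \<and> 1 \<le> D' r)"

definition solvable :: "'a set \<Rightarrow> ('a \<Rightarrow> 'a \<Rightarrow> bool) \<Rightarrow> ('a \<Rightarrow> nat) \<Rightarrow> bool" where
  "solvable V E D \<longleftrightarrow> (\<forall>r\<in>V. root_solvable E D r)"

definition pebbling_number :: "'a set \<Rightarrow> ('a \<Rightarrow> 'a \<Rightarrow> bool) \<Rightarrow> nat" where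
  "pebbling_number V E = (LEAST N. \<forall>D. distribution V D \<and> sum D V = N \<longrightarrow> solvable V E D)"

end

theory Submission
  imports Defs
begin

(* Fix a root r and a distribution D that cannot put a pebble on r, and let d be the diameter.
   A vertex joined to r by a walk of length k holds fewer than 2^k pebbles, so r is empty and
   every vertex holds fewer than 2^d.  Call a vertex heavy if it holds at least 2^(d-1) pebbles;
   a heavy vertex lies at distance exactly d from r.  Geodesics from distinct heavy vertices to r
   meet only in r: at a common vertex u at distance c from r, each source could deliver 2^(c-1)
   pebbles to u, which would then reach r.  Hence there are at most (n-1)/d heavy vertices, and
   summing the per-vertex bounds gives |D| <= (n-1)(2^(d-1) - 1) + floor((n-1)/d) 2^(d-1),
   one less than the bound of the theorem. *)

lemma walk_zero: "walk V E u w 0 \<Longrightarrow> u = w"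
  by (auto simp: walk_def)

lemma walk_refl: "u \<in> V \<Longrightarrow> walk V E u u 0"
  unfolding walk_def by (rule exI[of _ "\<lambda>_. u"]) auto

lemma walk_SucD:
  assumes "walk V E u w (Suc k)"
  shows "\<exists>u'. E u u' \<and> walk V E u' w k"
proof -
  obtain p where p: "p 0 = u" "p (Suc k) = w" "\<forall>i\<le>Suc k. p i \<in> V"
    "\<forall>i<Suc k. E (p i) (p (Suc i))"
    using assms by (auto simp: walk_def)
  then have "walk V E (p 1) w k"
    unfolding walk_def by (intro exI[of _ "\<lambda>i. p (Suc i)"]) auto
  then show ?thesis using p by auto
qed

lemma walk_append:
  assumes "walk V E u v j" and "walk V E v w k"
  shows "walk V E u w (j + k)"
proof -
  obtain p where p: "p 0 = u" "p j = v" "\<forall>i\<le>j. p i \<in> V" "\<forall>i<j. E (p i) (p (Suc i))"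
    using assms(1) by (auto simp: walk_def)
  obtain q where q: "q 0 = v" "q k = w" "\<forall>i\<le>k. q i \<in> V" "\<forall>i<k. E (q i) (q (Suc i))"
    using assms(2) by (auto simp: walk_def)
  define pq where "pq i = (if i \<le> j then p i else q (i - j))" for i
  have "E (pq i) (pq (Suc i))" if "i < j + k" for i
  proof (cases "i < j")
    case True
    then show ?thesis using p(4) by (auto simp: pq_def)
  next
    case False
    then have "E (q (i - j)) (q (Suc (i - j)))" using q(4) that by simp
    then show ?thesis using False p(2) q(1) by (auto simp: pq_def Suc_diff_le)
  qed
  moreover have "pq i \<in> V" if "i \<le> j + k" for i
    using p(3) q(3) that by (auto simp: pq_def)
  ultimately show ?thesis
    unfolding walk_def using p(1) p(2) q(1) q(2) by (intro exI[of _ pq]) (auto simp: pq_def)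
qed

lemma walk_path_prefix:
  "p 0 = u \<Longrightarrow> \<forall>i\<le>k. p i \<in> V \<Longrightarrow> \<forall>i<k. E (p i) (p (Suc i)) \<Longrightarrow> j \<le> k
    \<Longrightarrow> walk V E u (p j) j"
  unfolding walk_def by (intro exI[of _ p]) auto

lemma walk_path_suffix:
  "p k = w \<Longrightarrow> \<forall>i\<le>k. p i \<in> V \<Longrightarrow> \<forall>i<k. E (p i) (p (Suc i)) \<Longrightarrow> j \<le> k
    \<Longrightarrow> walk V E (p j) w (k - j)"
  unfolding walk_def by (intro exI[of _ "\<lambda>i. p (i + j)"]) auto

lemma walk_dist:
  assumes "connected_graph V E" and "x \<in> V" and "r \<in> V"
  shows "walk V E x r (dist V E x r)"
proof -
  obtain k where "walk V E x r k" using assms unfolding connected_graph_def by blast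
  then show ?thesis unfolding dist_def by (rule LeastI)
qed

lemma dist_le_diam:
  assumes "simple_graph V E" and "x \<in> V" and "r \<in> V"
  shows "dist V E x r \<le> diam V E"
proof -
  have "finite V" using assms(1) by (simp add: simple_graph_def)
  then have "finite {dist V E u v | u v. u \<in> V \<and> v \<in> V}"
    by (simp add: finite_image_set2)
  then show ?thesis unfolding diam_def by (rule Max_ge) (use assms in blast)
qed

lemma diam_pos:
  assumes "simple_graph V E" and "connected_graph V E" and "2 \<le> card V"
  shows "0 < diam V E"
proof -
  obtain a b where ab: "a \<in> V" "b \<in> V" "a \<noteq> b"
    using assms(3) card_le_Suc0_iff_eq[of V] by (force simp: simple_graph_def)
  then have "dist V E a b \<noteq> 0" using walk_dist[OF assms(2)] walk_zero by metis
  then show ?thesis using dist_le_diam[OF assms(1) ab(1,2)] by simp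
qed

lemma pebbling_steps_along_edge:
  assumes "E u u'" and "u \<noteq> u'" and "2 * m \<le> D u"
  shows "(pebbling_step E)\<^sup>*\<^sup>* D ((D(u := D u - 2 * m))(u' := D u' + m))"
  using assms(3)
proof (induction m arbitrary: D)
  case 0
  then show ?case by simp
next
  case (Suc m)
  define D1 where "D1 = (D(u := D u - 2))(u' := D u' + 1)"
  have "pebbling_step E D D1"
    unfolding pebbling_step_def D1_def using assms(1) Suc.prems by (intro exI[of _ u] exI[of _ u']) simp
  moreover have "(pebbling_step E)\<^sup>*\<^sup>* D1 ((D1(u := D1 u - 2 * m))(u' := D1 u' + m))"
    using Suc.prems assms(2) by (intro Suc.IH) (simp add: D1_def)
  moreover have "(D1(u := D1 u - 2 * m))(u' := D1 u' + m)
      = (D(u := D u - 2 * Suc m))(u' := D u' + Suc m)"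
    using assms(2) by (auto simp: D1_def fun_eq_iff)
  ultimately show ?case by (metis converse_rtranclp_into_rtranclp)
qed

text \<open>Stated as a pointwise inequality so that it also covers closed walks (\<open>u = w\<close>).\<close>

lemma pebbling_steps_along_walk:
  assumes "simple_graph V E" and "walk V E u w k" and "2 ^ k * m \<le> D u"
  shows "\<exists>D'. (pebbling_step E)\<^sup>*\<^sup>* D D' \<and>
    (\<forall>x. D x + (if x = w then m else 0) \<le> D' x + (if x = u then 2 ^ k * m else 0))"
  using assms(2,3)
proof (induction k arbitrary: u D)
  case 0
  then show ?case using walk_zero by (intro exI[of _ D]) fastforce
next
  case (Suc k)
  obtain u' where u': "E u u'" "walk V E u' w k" using walk_SucD[OF Suc.prems(1)] by blast
  have "u \<noteq> u'" using u'(1) assms(1) by (auto simp: simple_graph_def)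
  define D1 where "D1 = (D(u := D u - 2 * (2 ^ k * m)))(u' := D u' + 2 ^ k * m)"
  have D_D1: "(pebbling_step E)\<^sup>*\<^sup>* D D1"
    unfolding D1_def using Suc.prems(2) by (intro pebbling_steps_along_edge u'(1) \<open>u \<noteq> u'\<close>) simp
  have "2 ^ k * m \<le> D1 u'" by (simp add: D1_def)
  then obtain D' where D': "(pebbling_step E)\<^sup>*\<^sup>* D1 D'"
    "\<forall>x. D1 x + (if x = w then m else 0) \<le> D' x + (if x = u' then 2 ^ k * m else 0)"
    using Suc.IH[OF u'(2)] by blast
  have D1_D: "D1 x + (if x = u then 2 ^ Suc k * m else 0) = D x + (if x = u' then 2 ^ k * m else 0)"
    for x using \<open>u \<noteq> u'\<close> Suc.prems(2) by (auto simp: D1_def)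
  have "D x + (if x = w then m else 0) \<le> D' x + (if x = u then 2 ^ Suc k * m else 0)" for x
    using D1_D[of x] D'(2)[rule_format, of x] by linarith
  then show ?case using D_D1 D'(1) by (meson rtranclp_trans)
qed

lemma root_solvable_if_reachable:
  assumes "simple_graph V E" and "(pebbling_step E)\<^sup>*\<^sup>* D D'"
    and "walk V E x r k" and "2 ^ k \<le> D' x"
  shows "root_solvable E D r"
proof -
  obtain D'' where D'': "(pebbling_step E)\<^sup>*\<^sup>* D' D''"
    "\<forall>y. D' y + (if y = r then 1 else 0) \<le> D'' y + (if y = x then 2 ^ k else 0)"
    using pebbling_steps_along_walk[OF assms(1,3), of 1 D', unfolded mult_1_right] assms(4) by blast
  show ?thesis
  proof (cases "x = r")
    case True
    then have "1 \<le> D' r" using assms(4) order_trans[OF one_le_power[of "2::nat" k]] by simp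
    then show ?thesis using assms(2) unfolding root_solvable_def by blast
  next
    case False
    then have "1 \<le> D'' r" using D''(2)[rule_format, of r] by simp
    then show ?thesis using assms(2) D''(1) unfolding root_solvable_def by (meson rtranclp_trans)
  qed
qed

lemma root_solvable_if_two_sources:
  assumes "simple_graph V E" and "walk V E v u a" and "walk V E w u a" and "walk V E u r c"
    and "v \<noteq> w" and "u \<noteq> v" and "u \<noteq> w" and "0 < c"
    and "2 ^ (a + c - 1) \<le> D v" and "2 ^ (a + c - 1) \<le> D w"
  shows "root_solvable E D r"
proof -
  have cost: "2 ^ a * 2 ^ (c - 1) = (2::nat) ^ (a + c - 1)"
    using assms(8) by (simp add: power_add[symmetric])
  obtain D1 where D1: "(pebbling_step E)\<^sup>*\<^sup>* D D1"
    "\<forall>x. D x + (if x = u then 2 ^ (c - 1) else 0) \<le> D1 x + (if x = v then 2 ^ (a + c - 1) else 0)"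
    using pebbling_steps_along_walk[OF assms(1,2), of "2 ^ (c - 1)" D, unfolded cost] assms(9) by blast
  have "2 ^ (a + c - 1) \<le> D1 w" using D1(2)[rule_format, of w] assms(5,10) by simp
  then obtain D2 where D2: "(pebbling_step E)\<^sup>*\<^sup>* D1 D2"
    "\<forall>x. D1 x + (if x = u then 2 ^ (c - 1) else 0) \<le> D2 x + (if x = w then 2 ^ (a + c - 1) else 0)"
    using pebbling_steps_along_walk[OF assms(1,3), of "2 ^ (c - 1)" D1, unfolded cost] by blast
  have "(2::nat) ^ c = 2 ^ (c - 1) + 2 ^ (c - 1)"
    using assms(8) by (metis mult_2 power_Suc Suc_diff_1)
  then have "2 ^ c \<le> D2 u"
    using D1(2)[rule_format, of u] D2(2)[rule_format, of u] assms(6,7) by simp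
  moreover have "(pebbling_step E)\<^sup>*\<^sup>* D D2" using D1(1) D2(1) by simp
  ultimately show ?thesis using root_solvable_if_reachable[OF assms(1) _ assms(4)] by blast
qed

locale unsolvable_distribution =
  fixes V :: "'a set" and E :: "'a \<Rightarrow> 'a \<Rightarrow> bool" and D :: "'a \<Rightarrow> nat" and r :: 'a and d :: nat
  assumes simple: "simple_graph V E"
    and root: "r \<in> V"
    and eccentricity: "\<And>x. x \<in> V \<Longrightarrow> \<exists>k\<le>d. walk V E x r k"
    and unsolvable: "\<not> root_solvable E D r"
begin

lemma finite_vertices: "finite V"
  using simple by (simp add: simple_graph_def)

lemma pebbles_less_pow_walk: "walk V E x r k \<Longrightarrow> D x < 2 ^ k"
  using root_solvable_if_reachable[OF simple rtranclp.rtrancl_refl] unsolvable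
  by (meson not_less)

lemma pebbles_less: "x \<in> V \<Longrightarrow> D x < 2 ^ d"
  using eccentricity pebbles_less_pow_walk
  by (meson order_less_le_trans one_le_numeral power_increasing)

lemma root_empty: "D r = 0"
  using pebbles_less_pow_walk[OF walk_refl[OF root]] by simp

definition heavy :: "'a set" where
  "heavy = {x \<in> V. 2 ^ (d - 1) \<le> D x}"

lemma heavy_walk_length_ge:
  assumes "v \<in> heavy" and "walk V E v r k"
  shows "d \<le> k"
proof (rule ccontr)
  assume "\<not> d \<le> k"
  then have "(2::nat) ^ k \<le> 2 ^ (d - 1)" by (intro power_increasing) auto
  also have "\<dots> \<le> D v" using assms(1) by (simp add: heavy_def)
  finally show False using pebbles_less_pow_walk[OF assms(2)] by simp
qed

lemma walk_from_heavy:
  assumes "v \<in> heavy"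
  shows "walk V E v r d"
proof -
  obtain k where "k \<le> d" "walk V E v r k"
    using eccentricity assms by (auto simp: heavy_def)
  moreover from this have "d \<le> k" using heavy_walk_length_ge[OF assms] by blast
  ultimately show ?thesis by simp
qed

lemma heavy_walks_meet_eq:
  assumes "v \<in> heavy" and "w \<in> heavy" and "walk V E v u j" and "walk V E w u j'"
    and "walk V E u r (d - j')" and "j \<le> j'" and "j' < d"
  shows "v = w \<and> j = j'"
proof -
  have "\<not> j < j'"
  proof
    assume "j < j'"
    then have "j + (d - j') < d" using assms(7) by linarith
    moreover have "walk V E v r (j + (d - j'))" using walk_append[OF assms(3,5)] .
    ultimately show False using heavy_walk_length_ge[OF assms(1)] by fastforce
  qed
  then have "j = j'" using assms(6) by simp
  moreover have "v = w"
  proof (rule ccontr)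
    assume "v \<noteq> w"
    consider "u = v" | "u = w" | "u \<noteq> v" "u \<noteq> w" by blast
    then show False
    proof cases
      case 1
      then have "d \<le> d - j'" using heavy_walk_length_ge[OF assms(1)] assms(5) by simp
      then have "j' = 0" using assms(7) by simp
      then show False using \<open>v \<noteq> w\<close> 1 assms(4) walk_zero by metis
    next
      case 2
      then have "d \<le> d - j'" using heavy_walk_length_ge[OF assms(2)] assms(5) by simp
      then have "j = 0" using assms(7) \<open>j = j'\<close> by simp
      then show False using \<open>v \<noteq> w\<close> 2 assms(3) walk_zero by metis
    next
      case 3
      have "j + (d - j) - 1 = d - 1" using assms(7) \<open>j = j'\<close> by simp
      then have "root_solvable E D r"
        using root_solvable_if_two_sources[OF simple assms(3) assms(4,5)[folded \<open>j = j'\<close>] \<open>v \<noteq> w\<close> 3]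
          assms(1,2,7) \<open>j = j'\<close> by (simp add: heavy_def)
      then show False using unsolvable by contradiction
    qed
  qed
  ultimately show ?thesis by simp
qed

lemma card_heavy_mult_le: "card heavy * d \<le> card V - 1"
proof -
  have "\<forall>v\<in>heavy. \<exists>p. p 0 = v \<and> p d = r \<and> (\<forall>i\<le>d. p i \<in> V) \<and> (\<forall>i<d. E (p i) (p (Suc i)))"
    using walk_from_heavy by (simp add: walk_def)
  then obtain P where P: "\<And>v. v \<in> heavy \<Longrightarrow>
      P v 0 = v \<and> P v d = r \<and> (\<forall>i\<le>d. P v i \<in> V) \<and> (\<forall>i<d. E (P v i) (P v (Suc i)))"
    by metis
  have prefix: "walk V E v (P v j) j" if "v \<in> heavy" "j \<le> d" for v j
    using walk_path_prefix[of "P v" v d V E j] P[OF that(1)] that(2) by blast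
  have suffix: "walk V E (P v j) r (d - j)" if "v \<in> heavy" "j \<le> d" for v j
    using walk_path_suffix[of "P v" d r V E j] P[OF that(1)] that(2) by blast
  have "inj_on (\<lambda>(v, j). P v j) (heavy \<times> {..<d})"
  proof (rule inj_onI, clarsimp)
    fix v j w j'
    assume v: "v \<in> heavy" "j < d" and w: "w \<in> heavy" "j' < d" and meet: "P v j = P w j'"
    have "walk V E v (P v j) j" "walk V E (P v j) r (d - j)"
      using prefix[OF v(1)] suffix[OF v(1)] v(2) by simp_all
    moreover have "walk V E w (P v j) j'" "walk V E (P v j) r (d - j')"
      using prefix[OF w(1)] suffix[OF w(1)] w(2) meet by simp_all
    ultimately show "v = w \<and> j = j'"
      using heavy_walks_meet_eq[OF v(1) w(1), of "P v j" j j'] heavy_walks_meet_eq[OF w(1) v(1), of "P v j" j' j]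
        v(2) w(2) by (cases "j \<le> j'") auto
  qed
  moreover have "(\<lambda>(v, j). P v j) ` (heavy \<times> {..<d}) \<subseteq> V - {r}"
  proof clarsimp
    fix v j
    assume "v \<in> heavy" "j < d"
    moreover from this have "walk V E v (P v j) j" using prefix by simp
    ultimately show "P v j \<in> V \<and> P v j \<noteq> r"
      using P heavy_walk_length_ge by force
  qed
  ultimately have "card (heavy \<times> {..<d}) \<le> card (V - {r})"
    using finite_vertices by (intro card_inj_on_le) auto
  then show ?thesis using finite_vertices root by (simp add: card_cartesian_product)
qed

lemma sum_pebbles_le:
  assumes "0 < d"
  shows "sum D V \<le> (card V - 1) * (2 ^ (d - 1) - 1) + (card V - 1) div d * 2 ^ (d - 1)"
proof -
  define t where "t = (2::nat) ^ (d - 1)"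
  have "2 ^ d = t + t"
    using power_minus_mult[OF assms, of "2::nat"] by (simp add: t_def)
  then have pointwise: "D x \<le> (t - 1) + (if x \<in> heavy then t else 0)" if "x \<in> V" for x
    using pebbles_less[OF that] that by (auto simp: heavy_def t_def)
  have heavy_subset: "heavy \<subseteq> V - {r}"
    using root_empty by (auto simp: heavy_def)
  have "card heavy \<le> (card V - 1) div d"
    using div_le_mono[OF card_heavy_mult_le, of d] assms by simp
  have "sum D V = sum D (V - {r})"
    using root_empty finite_vertices root by (simp add: sum.remove)
  also have "\<dots> \<le> (\<Sum>x\<in>V - {r}. (t - 1) + (if x \<in> heavy then t else 0))"
    using pointwise by (intro sum_mono) auto
  also have "\<dots> = card (V - {r}) * (t - 1) + card heavy * t"
    using Int_absorb1[OF heavy_subset] finite_vertices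
    by (simp add: sum.distrib sum.If_cases mult.commute)
  also have "\<dots> \<le> (card V - 1) * (t - 1) + (card V - 1) div d * t"
    using \<open>card heavy \<le> (card V - 1) div d\<close> finite_vertices root by simp
  finally show ?thesis by (simp add: t_def)
qed

end

lemma unsolvable_distributionI:
  assumes "simple_graph V E" and "connected_graph V E" and "r \<in> V"
    and "\<not> root_solvable E D r"
  shows "unsolvable_distribution V E D r (diam V E)"
proof unfold_locales
  fix x assume "x \<in> V"
  then show "\<exists>k\<le>diam V E. walk V E x r k"
    using walk_dist[OF assms(2) _ assms(3)] dist_le_diam[OF assms(1) _ assms(3)] by blast
qed (use assms in auto)

theorem theorem2:
  fixes V :: "'a set" and E :: "'a \<Rightarrow> 'a \<Rightarrow> bool"
  assumes "simple_graph V E" and "connected_graph V E" and "card V \<ge> 2"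
  shows "int (pebbling_number V E)
    \<le> (int (card V) + int ((card V - 1) div diam V E) - 1) * 2 ^ (diam V E - 1) - int (card V) + 2"
proof -
  define n d where "n = card V" and "d = diam V E"
  define q t where "q = (n - 1) div d" and "t = (2::nat) ^ (d - 1)"
  define N where "N = (n - 1) * (t - 1) + q * t + 1"
  have "solvable V E D" if "sum D V = N" for D
    unfolding solvable_def
  proof (rule ballI, rule ccontr)
    fix r assume "r \<in> V" and "\<not> root_solvable E D r"
    then have "sum D V \<le> N - 1"
      using unsolvable_distribution.sum_pebbles_le[OF unsolvable_distributionI[OF assms(1,2)]]
        diam_pos[OF assms] by (simp add: N_def n_def d_def q_def t_def)
    then show False using that by (simp add: N_def)
  qed
  then have "pebbling_number V E \<le> N"
    unfolding pebbling_number_def by (intro Least_le) blast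
  moreover have "1 \<le> n" and "1 \<le> t"
    using assms(3) by (simp_all add: n_def t_def)
  then have "int N = (int n + int q - 1) * int t - int n + 2"
    unfolding N_def by (simp only: of_nat_add of_nat_mult of_nat_diff of_nat_1) (simp add: algebra_simps)
  ultimately show ?thesis by (simp add: n_def d_def q_def t_def)
qed

end
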